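(* In the setting below, the map $\psi:W\to\mathbb{R}_+^n$, $\psi(w)=(B_1(w),\dots,B_n(w))$, is injective.
   Context: Setting: $T^*$ is a triangulation of a closed surface $S$ with vertex set $T^0$; $\Sigma=S\setminus N(T^0)$ where $N(T^0)$ is a small open regular disjoint neighborhood of $T^0$; $\Sigma$ has boundary components labeled $1,\dots,n$. $T=T^*\cap\Sigma$ is the ideal triangulation with ideal edges $E$ and ideal faces $F$; $ij$ denotes the ideal edge between boundary components $i,j$ and $ijk$ the ideal face adjacent to boundary components $i,j,k$. $\theta_i^f$ is the length of the side of the right-angled hyperbolic hexagon of face $f=ijk$ (pairwise non-adjacent sides of lengths $l_{ij},l_{jk},l_{ki}$) opposite to the side of length $l_{jk}$, i.e. $\cosh\theta_i^f=\frac{\cosh l_{jk}+\cosh l_{ki}\cosh l_{ij}}{\sinh l_{ki}\sinh l_{ij}}$. Fix $l^0\in\mathbb{R}_+^{|E|}$. $W=\{w\in\mathbb{R}^n: w_i+w_j>-\ln\cosh\frac{l^0_{ij}}{2}\ \forall ij\in E\}$ (admissible discrete conformal factors); for $w\in W$, $\cosh\frac{l_{ij}}{2}=e^{w_i+w_j}\cosh\frac{l^0_{ij}}{2}$, and $B_i(w)=\sum_{f\in F_i}\theta_i^f$, where $F_i$ is the set of faces adjacent to boundary component $i$. *)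

theory Defs
  imports "HOL-Analysis.Analysis" "HOL-Library.Multiset"
begin

text \<open>Vertices (= boundary components of Sigma) are 1..n. Each face f in F has three
  corners k = 0,1,2 with vertex fv f k; fe f k is the edge of f opposite to corner k,
  whose endpoints are the corners (k+1) mod 3 and (k+2) mod 3. ends e gives the two
  endpoints of edge e.\<close>

definition closed_triangulation ::
  "nat \<Rightarrow> 'f set \<Rightarrow> 'e set \<Rightarrow> ('f \<Rightarrow> nat \<Rightarrow> nat) \<Rightarrow> ('f \<Rightarrow> nat \<Rightarrow> 'e) \<Rightarrow> ('e \<Rightarrow> nat \<times> nat) \<Rightarrow> bool"
where
  "closed_triangulation n F E fv fe ends \<longleftrightarrow>
     finite F \<and> finite E \<and> F \<noteq> {} \<and>
     (\<forall>f\<in>F. \<forall>k<3. fv f k \<in> {1..n} \<and> fe f k \<in> E \<and>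
        {# fst (ends (fe f k)), snd (ends (fe f k)) #} = {# fv f ((k+1) mod 3), fv f ((k+2) mod 3) #}) \<and>
     (\<forall>e\<in>E. card {(f,k). f \<in> F \<and> k < 3 \<and> fe f k = e} = 2) \<and>
     (\<forall>i\<in>{1..n}. \<exists>f\<in>F. \<exists>k<3. fv f k = i)"

text \<open>Length of the side of a right-angled hyperbolic hexagon opposite to the side of
  length a, where the other two pairwise non-adjacent sides have lengths b, c.\<close>
definition hex_side :: "real \<Rightarrow> real \<Rightarrow> real \<Rightarrow> real" where
  "hex_side a b c = arcosh ((cosh a + cosh b * cosh c) / (sinh b * sinh c))"

definition conf_length :: "('e \<Rightarrow> real) \<Rightarrow> ('e \<Rightarrow> nat \<times> nat) \<Rightarrow> (nat \<Rightarrow> real) \<Rightarrow> 'e \<Rightarrow> real" where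
  "conf_length l0 ends w e =
     2 * arcosh (exp (w (fst (ends e)) + w (snd (ends e))) * cosh (l0 e / 2))"

definition corner_theta ::
  "('f \<Rightarrow> nat \<Rightarrow> 'e) \<Rightarrow> ('e \<Rightarrow> real) \<Rightarrow> ('e \<Rightarrow> nat \<times> nat) \<Rightarrow> (nat \<Rightarrow> real) \<Rightarrow> 'f \<Rightarrow> nat \<Rightarrow> real"
where
  "corner_theta fe l0 ends w f k =
     (let l = conf_length l0 ends w in
      hex_side (l (fe f k)) (l (fe f ((k+1) mod 3))) (l (fe f ((k+2) mod 3))))"

definition Bcurv ::
  "'f set \<Rightarrow> ('f \<Rightarrow> nat \<Rightarrow> nat) \<Rightarrow> ('f \<Rightarrow> nat \<Rightarrow> 'e) \<Rightarrow> ('e \<Rightarrow> real) \<Rightarrow> ('e \<Rightarrow> nat \<times> nat)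
     \<Rightarrow> nat \<Rightarrow> (nat \<Rightarrow> real) \<Rightarrow> real"
where
  "Bcurv F fv fe l0 ends i w =
     (\<Sum>(f,k) \<in> {(f,k). f \<in> F \<and> k < 3 \<and> fv f k = i}. corner_theta fe l0 ends w f k)"

definition admissible_W :: "nat \<Rightarrow> 'e set \<Rightarrow> ('e \<Rightarrow> real) \<Rightarrow> ('e \<Rightarrow> nat \<times> nat) \<Rightarrow> (nat \<Rightarrow> real) set" where
  "admissible_W n E l0 ends =
     {w. (\<forall>i. i \<notin> {1..n} \<longrightarrow> w i = 0) \<and>
         (\<forall>e\<in>E. w (fst (ends e)) + w (snd (ends e)) > - ln (cosh (l0 e / 2)))}"

end

theory Submission
  imports Defs
begin

text \<open>Suppose two admissible factors \<open>w\<^sub>1 \<noteq> w\<^sub>2\<close> have the same curvatures \<open>B\<close>, and put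
  \<open>u = w\<^sub>2 - w\<^sub>1\<close>. The segment \<open>w\<^sub>1 + t u\<close> stays in the convex set \<open>W\<close>, and
  \<open>g(t) = \<Sum>\<^sub>i u\<^sub>i B\<^sub>i(w\<^sub>1 + t u)\<close> takes the same value at \<open>t = 0\<close> and \<open>t = 1\<close>.
  Regrouped by faces, \<open>g'(t)\<close> is a sum of quadratic forms in the values of \<open>u\<close> at the three
  corners, each divided by a positive square root. Writing \<open>cosh l\<^sub>e = 1 + 2\<epsilon>\<^sub>e\<close>, each form
  is minus twice a sum of squares with positive weights, vanishing only when \<open>u\<close> vanishes on
  the face. Since every boundary component lies on a face, \<open>g' < 0\<close> on \<open>[0,1]\<close>, a
  contradiction.\<close>

definition hex_side_deriv_num :: "real \<Rightarrow> real \<Rightarrow> real \<Rightarrow> real \<Rightarrow> real \<Rightarrow> real \<Rightarrow> real" where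
  "hex_side_deriv_num a b c da db dc =
     da + db * c + b * dc - (a + b * c) * (b * db / (b\<^sup>2 - 1) + c * dc / (c\<^sup>2 - 1))"

definition hex_det :: "real \<Rightarrow> real \<Rightarrow> real \<Rightarrow> real" where
  "hex_det a b c = a\<^sup>2 + b\<^sup>2 + c\<^sup>2 + 2 * a * b * c - 1"

text \<open>Along \<open>w + t u\<close>, with \<open>a\<^sub>k\<close> the cosh of the edge opposite to corner \<open>k\<close> of a face and
  \<open>u\<^sub>k\<close> the value of \<open>u\<close> there, \<open>\<Sum>\<^sub>k u\<^sub>k \<theta>\<^sub>k'\<close> is \<open>face_form\<close> divided by \<open>sqrt (hex_det a\<^sub>0 a\<^sub>1 a\<^sub>2)\<close>,
  because \<open>(cosh l\<^sub>e)' = 2 (cosh l\<^sub>e + 1) (u\<^sub>i + u\<^sub>j)\<close> for an edge \<open>e = ij\<close>.\<close>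
definition face_form :: "real \<Rightarrow> real \<Rightarrow> real \<Rightarrow> real \<Rightarrow> real \<Rightarrow> real \<Rightarrow> real" where
  "face_form a0 a1 a2 u0 u1 u2 =
       u0 * hex_side_deriv_num a0 a1 a2
              (2 * (a0 + 1) * (u1 + u2)) (2 * (a1 + 1) * (u2 + u0)) (2 * (a2 + 1) * (u0 + u1))
     + u1 * hex_side_deriv_num a1 a2 a0
              (2 * (a1 + 1) * (u2 + u0)) (2 * (a2 + 1) * (u0 + u1)) (2 * (a0 + 1) * (u1 + u2))
     + u2 * hex_side_deriv_num a2 a0 a1
              (2 * (a2 + 1) * (u0 + u1)) (2 * (a0 + 1) * (u1 + u2)) (2 * (a1 + 1) * (u2 + u0))"

lemma hex_det_pos: "a > 1 \<Longrightarrow> b > 1 \<Longrightarrow> c > 1 \<Longrightarrow> hex_det a b c > 0"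
proof -
  assume "a > 1" "b > 1" "c > 1"
  then have "a\<^sup>2 > 1" "b\<^sup>2 > 0" "c\<^sup>2 > 0" "a * b * c > 0"
    by (auto simp: one_less_power)
  then show ?thesis unfolding hex_det_def by linarith
qed

lemma hex_det_rotate: "hex_det b c a = hex_det a b c"
  unfolding hex_det_def by (simp add: algebra_simps)

lemma hex_side_deriv_num_conformal:
  fixes p q r x y z :: real
  assumes "q > 0" "r > 0"
  shows "hex_side_deriv_num (1 + 2*p) (1 + 2*q) (1 + 2*r)
           (4*(1 + p)*p*x) (4*(1 + q)*q*y) (4*(1 + r)*r*z)
       = 4*(1 + p)*p*x + 4*(1 + 2*r)*(1 + q)*q*y + 4*(1 + 2*q)*(1 + r)*r*z
           - ((1 + 2*p) + (1 + 2*q)*(1 + 2*r)) * ((1 + 2*q)*y + (1 + 2*r)*z)"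
proof -
  have "(1 + 2*e) * (4*(1 + e)*e*c) / ((1 + 2*e)\<^sup>2 - 1) = (1 + 2*e) * c" if "e > 0" for e c :: real
  proof -
    have "(1 + 2*e)\<^sup>2 - 1 = 4*(1 + e)*e" by (simp add: algebra_simps power2_eq_square)
    moreover have "4*(1 + e)*e \<noteq> 0" using that by simp
    ultimately show ?thesis by simp
  qed
  then show ?thesis
    using assms unfolding hex_side_deriv_num_def by (simp add: algebra_simps)
qed

lemma face_form_sum_of_squares:
  fixes e0 e1 e2 z0 z1 z2 :: real
  assumes "e0 > 0" "e1 > 0" "e2 > 0"
  shows "face_form (1 + 2*e0) (1 + 2*e1) (1 + 2*e2)
           ((e1*z1 + e2*z2 - e0*z0)/2) ((e2*z2 + e0*z0 - e1*z1)/2) ((e0*z0 + e1*z1 - e2*z2)/2)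
       = - 2 * ((e0*z0\<^sup>2 + e1*z1\<^sup>2 + e2*z2\<^sup>2)
                + (e0*e1*(z0 - z1)\<^sup>2 + e1*e2*(z1 - z2)\<^sup>2 + e0*e2*(z0 - z2)\<^sup>2)
                + 2*(e0\<^sup>2*z0\<^sup>2 + e1\<^sup>2*z1\<^sup>2 + e2\<^sup>2*z2\<^sup>2)
                + (e0*(e1*z1 + e2*z2 - e0*z0)\<^sup>2 + e1*(e2*z2 + e0*z0 - e1*z1)\<^sup>2
                   + e2*(e0*z0 + e1*z1 - e2*z2)\<^sup>2))"
proof -
  have sums: "(e2*z2 + e0*z0 - e1*z1)/2 + (e0*z0 + e1*z1 - e2*z2)/2 = e0*z0"
    "(e0*z0 + e1*z1 - e2*z2)/2 + (e1*z1 + e2*z2 - e0*z0)/2 = e1*z1"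
    "(e1*z1 + e2*z2 - e0*z0)/2 + (e2*z2 + e0*z0 - e1*z1)/2 = e2*z2"
    by (simp_all add: field_simps)
  have da: "2 * ((1 + 2*e) + 1) * (e*z) = 4*(1 + e)*e*z" for e z :: real
    by simp
  have "face_form (1 + 2*e0) (1 + 2*e1) (1 + 2*e2)
           ((e1*z1 + e2*z2 - e0*z0)/2) ((e2*z2 + e0*z0 - e1*z1)/2) ((e0*z0 + e1*z1 - e2*z2)/2)
      = ((e1*z1 + e2*z2 - e0*z0)/2) * (4*(1+e0)*e0*z0 + 4*(1+2*e2)*(1+e1)*e1*z1 + 4*(1+2*e1)*(1+e2)*e2*z2
               - ((1+2*e0)+(1+2*e1)*(1+2*e2))*((1+2*e1)*z1+(1+2*e2)*z2))
      + ((e2*z2 + e0*z0 - e1*z1)/2) * (4*(1+e1)*e1*z1 + 4*(1+2*e0)*(1+e2)*e2*z2 + 4*(1+2*e2)*(1+e0)*e0*z0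
               - ((1+2*e1)+(1+2*e2)*(1+2*e0))*((1+2*e2)*z2+(1+2*e0)*z0))
      + ((e0*z0 + e1*z1 - e2*z2)/2) * (4*(1+e2)*e2*z2 + 4*(1+2*e1)*(1+e0)*e0*z0 + 4*(1+2*e0)*(1+e1)*e1*z1
               - ((1+2*e2)+(1+2*e0)*(1+2*e1))*((1+2*e0)*z0+(1+2*e1)*z1))"
    unfolding face_form_def sums da
    using hex_side_deriv_num_conformal[where p=e0 and q=e1 and r=e2 and x=z0 and y=z1 and z=z2]
      hex_side_deriv_num_conformal[where p=e1 and q=e2 and r=e0 and x=z1 and y=z2 and z=z0]
      hex_side_deriv_num_conformal[where p=e2 and q=e0 and r=e1 and x=z2 and y=z0 and z=z1]
      assms
    by simp
  also have "\<dots> = - 2 * ((e0*z0\<^sup>2 + e1*z1\<^sup>2 + e2*z2\<^sup>2)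
                + (e0*e1*(z0 - z1)\<^sup>2 + e1*e2*(z1 - z2)\<^sup>2 + e0*e2*(z0 - z2)\<^sup>2)
                + 2*(e0\<^sup>2*z0\<^sup>2 + e1\<^sup>2*z1\<^sup>2 + e2\<^sup>2*z2\<^sup>2)
                + (e0*(e1*z1 + e2*z2 - e0*z0)\<^sup>2 + e1*(e2*z2 + e0*z0 - e1*z1)\<^sup>2
                   + e2*(e0*z0 + e1*z1 - e2*z2)\<^sup>2))"
    by (simp add: field_simps power2_eq_square)
  finally show ?thesis .
qed

lemma face_form_le:
  assumes "a0 > 1" "a1 > 1" "a2 > 1"
  shows "face_form a0 a1 a2 u0 u1 u2
           \<le> - 4 * ((u1 + u2)\<^sup>2 / (a0 - 1) + (u2 + u0)\<^sup>2 / (a1 - 1) + (u0 + u1)\<^sup>2 / (a2 - 1))"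
proof -
  define e0 e1 e2 where "e0 = (a0 - 1)/2" and "e1 = (a1 - 1)/2" and "e2 = (a2 - 1)/2"
  have e: "e0 > 0" "e1 > 0" "e2 > 0" using assms by (auto simp: e0_def e1_def e2_def)
  define z0 z1 z2 where "z0 = (u1 + u2)/e0" and "z1 = (u2 + u0)/e1" and "z2 = (u0 + u1)/e2"
  have z: "u1 + u2 = e0*z0" "u2 + u0 = e1*z1" "u0 + u1 = e2*z2"
    using e by (auto simp: z0_def z1_def z2_def)
  have a: "a0 = 1 + 2*e0" "a1 = 1 + 2*e1" "a2 = 1 + 2*e2"
    by (auto simp: e0_def e1_def e2_def field_simps)
  have u: "u0 = (e1*z1 + e2*z2 - e0*z0)/2" "u1 = (e2*z2 + e0*z0 - e1*z1)/2"
    "u2 = (e0*z0 + e1*z1 - e2*z2)/2"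
    unfolding z[symmetric] by simp_all
  define R where "R = (e0*e1*(z0 - z1)\<^sup>2 + e1*e2*(z1 - z2)\<^sup>2 + e0*e2*(z0 - z2)\<^sup>2)
                + 2*(e0\<^sup>2*z0\<^sup>2 + e1\<^sup>2*z1\<^sup>2 + e2\<^sup>2*z2\<^sup>2)
                + (e0*(e1*z1 + e2*z2 - e0*z0)\<^sup>2 + e1*(e2*z2 + e0*z0 - e1*z1)\<^sup>2
                   + e2*(e0*z0 + e1*z1 - e2*z2)\<^sup>2)"
  have "R \<ge> 0"
    unfolding R_def using e by (intro add_nonneg_nonneg mult_nonneg_nonneg; simp)
  moreover have "e0*z0\<^sup>2 + e1*z1\<^sup>2 + e2*z2\<^sup>2
      = 2 * ((u1 + u2)\<^sup>2 / (a0 - 1) + (u2 + u0)\<^sup>2 / (a1 - 1) + (u0 + u1)\<^sup>2 / (a2 - 1))"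
    unfolding z a using e by (simp add: power2_eq_square)
  moreover have "face_form a0 a1 a2 u0 u1 u2 = -2 * ((e0*z0\<^sup>2 + e1*z1\<^sup>2 + e2*z2\<^sup>2) + R)"
    unfolding a u face_form_sum_of_squares[OF e] R_def by (simp add: algebra_simps)
  ultimately show ?thesis by simp
qed

lemma face_form_nonpos:
  assumes "a0 > 1" "a1 > 1" "a2 > 1"
  shows "face_form a0 a1 a2 u0 u1 u2 \<le> 0"
proof -
  have "(u1 + u2)\<^sup>2 / (a0 - 1) + (u2 + u0)\<^sup>2 / (a1 - 1) + (u0 + u1)\<^sup>2 / (a2 - 1) \<ge> 0"
    using assms by (intro add_nonneg_nonneg divide_nonneg_pos) auto
  then have "- 4 * ((u1 + u2)\<^sup>2 / (a0 - 1) + (u2 + u0)\<^sup>2 / (a1 - 1) + (u0 + u1)\<^sup>2 / (a2 - 1)) \<le> 0"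
    by simp
  with face_form_le[OF assms] show ?thesis by (rule order_trans)
qed

lemma face_form_neg:
  assumes "a0 > 1" "a1 > 1" "a2 > 1" and "(u0, u1, u2) \<noteq> (0, 0, 0)"
  shows "face_form a0 a1 a2 u0 u1 u2 < 0"
proof -
  define A B C where "A = (u1 + u2)\<^sup>2 / (a0 - 1)" and "B = (u2 + u0)\<^sup>2 / (a1 - 1)"
    and "C = (u0 + u1)\<^sup>2 / (a2 - 1)"
  have "u1 + u2 \<noteq> 0 \<or> u2 + u0 \<noteq> 0 \<or> u0 + u1 \<noteq> 0"
    using assms(4) by auto
  then have "A > 0 \<or> B > 0 \<or> C > 0"
    using assms(1-3) by (auto simp: A_def B_def C_def)
  moreover have "A \<ge> 0" "B \<ge> 0" "C \<ge> 0"
    using assms(1-3) by (simp_all add: A_def B_def C_def)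
  moreover have "face_form a0 a1 a2 u0 u1 u2 \<le> - 4 * (A + B + C)"
    unfolding A_def B_def C_def by (rule face_form_le[OF assms(1-3)])
  ultimately show ?thesis by auto
qed

lemma arcosh_hexagon_law_has_real_derivative:
  fixes a b c :: "real \<Rightarrow> real"
  assumes "(a has_real_derivative da) (at t)" "(b has_real_derivative db) (at t)"
      "(c has_real_derivative dc) (at t)"
    and "a t > 1" "b t > 1" "c t > 1"
  shows "((\<lambda>x. arcosh ((a x + b x * c x) / sqrt (((b x)\<^sup>2 - 1) * ((c x)\<^sup>2 - 1))))
          has_real_derivative
           hex_side_deriv_num (a t) (b t) (c t) da db dc / sqrt (hex_det (a t) (b t) (c t))) (at t)"
proof -
  define M where "M = ((b t)\<^sup>2 - 1) * ((c t)\<^sup>2 - 1)"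
  define N where "N = a t + b t * c t"
  define D where "D = hex_det (a t) (b t) (c t)"
  define dM where "dM = 2 * b t * db * ((c t)\<^sup>2 - 1) + ((b t)\<^sup>2 - 1) * (2 * c t * dc)"
  define dN where "dN = da + db * c t + b t * dc"
  have b2: "(b t)\<^sup>2 - 1 > 0" and c2: "(c t)\<^sup>2 - 1 > 0"
    using assms by (auto simp: one_less_power)
  then have M: "M > 0" unfolding M_def by simp
  have D: "D > 0" unfolding D_def using hex_det_pos assms by simp
  have "N > 0" unfolding N_def using assms mult_pos_pos[of "b t" "c t"] by linarith
  have ND: "N\<^sup>2 - M = D"
    unfolding N_def M_def D_def hex_det_def by (simp add: algebra_simps power2_eq_square)
  have "sqrt M < N"
    using \<open>N > 0\<close> ND D M by (metis diff_gt_0_iff_gt real_less_lsqrt real_sqrt_pow2 less_imp_le)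
  then have F: "N / sqrt M > 1" using M by simp
  have sqrtF: "sqrt ((N / sqrt M)\<^sup>2 - 1) = sqrt D / sqrt M"
    using ND M by (simp add: power_divide field_simps real_sqrt_divide)
  have dF: "((\<lambda>x. (a x + b x * c x) / sqrt (((b x)\<^sup>2 - 1) * ((c x)\<^sup>2 - 1))) has_real_derivative
          (dN * sqrt M - N * (dM * (inverse (sqrt M) / 2))) / (sqrt M * sqrt M)) (at t)"
    unfolding dN_def dM_def N_def M_def
    using assms M[unfolded M_def]
    by (auto intro!: derivative_eq_intros simp: power2_eq_square algebra_simps)
  have "(arcosh has_real_derivative 1 / (sqrt D / sqrt M))
          (at ((a t + b t * c t) / sqrt (((b t)\<^sup>2 - 1) * ((c t)\<^sup>2 - 1))))"
    unfolding sqrtF[symmetric] N_def[symmetric] M_def[symmetric]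
    using F by (rule arcosh_real_has_field_derivative)
  from DERIV_chain2[OF this dF]
  have "((\<lambda>x. arcosh ((a x + b x * c x) / sqrt (((b x)\<^sup>2 - 1) * ((c x)\<^sup>2 - 1)))) has_real_derivative
          1 / (sqrt D / sqrt M) * ((dN * sqrt M - N * (dM * (inverse (sqrt M) / 2))) / (sqrt M * sqrt M))) (at t)" .
  moreover have "1 / (sqrt D / sqrt M) * ((dN * sqrt M - N * (dM * (inverse (sqrt M) / 2))) / (sqrt M * sqrt M))
      = (dN - N * (dM / (2 * M))) / sqrt D"
    using M D by (simp add: field_simps)
  moreover have "dM / (2 * M) = b t * db / ((b t)\<^sup>2 - 1) + c t * dc / ((c t)\<^sup>2 - 1)"
    unfolding dM_def M_def using b2 c2 by (simp add: divide_simps)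
  then have "dN - N * (dM / (2 * M)) = hex_side_deriv_num (a t) (b t) (c t) da db dc"
    unfolding hex_side_deriv_num_def dN_def N_def by simp
  ultimately show ?thesis unfolding D_def by simp
qed

lemma hex_side_eq_arcosh_cosh:
  assumes "b \<ge> 0" "c \<ge> 0"
  shows "hex_side a b c =
           arcosh ((cosh a + cosh b * cosh c) / sqrt (((cosh b)\<^sup>2 - 1) * ((cosh c)\<^sup>2 - 1)))"
proof -
  have "sinh x = sqrt ((cosh x)\<^sup>2 - 1)" if "x \<ge> 0" for x :: real
    using that by (simp add: cosh_square_eq)
  then show ?thesis
    unfolding hex_side_def using assms by (simp add: real_sqrt_mult)
qed

lemma cosh_double_arcosh: "(y::real) \<ge> 1 \<Longrightarrow> cosh (2 * arcosh y) = 2 * y\<^sup>2 - 1"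
  by (simp add: cosh_double_cosh)

lemma exp_mult_gt_1_iff: "(C::real) > 0 \<Longrightarrow> exp s * C > 1 \<longleftrightarrow> s > - ln C"
proof -
  assume "C > 0"
  then have "exp s * C > 1 \<longleftrightarrow> exp s > exp (- ln C)"
    by (simp add: exp_minus field_simps)
  then show ?thesis by simp
qed

lemma hex_side_conf_length_has_real_derivative:
  fixes w u :: "nat \<Rightarrow> real" and ends :: "'e \<Rightarrow> nat \<times> nat" and l0 :: "'e \<Rightarrow> real"
    and ea eb ec :: 'e and t :: real
  defines "wt \<equiv> \<lambda>x i. w i + x * u i"
    and "p \<equiv> \<lambda>e. u (fst (ends e)) + u (snd (ends e))"
    and "T \<equiv> \<lambda>e. cosh (conf_length l0 ends (\<lambda>i. w i + t * u i) e)"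
  assumes adm: "\<forall>e\<in>{ea, eb, ec}. wt t (fst (ends e)) + wt t (snd (ends e)) > - ln (cosh (l0 e / 2))"
  shows "((\<lambda>x. hex_side (conf_length l0 ends (wt x) ea) (conf_length l0 ends (wt x) eb)
                        (conf_length l0 ends (wt x) ec))
          has_real_derivative
            hex_side_deriv_num (T ea) (T eb) (T ec)
              (2 * (T ea + 1) * p ea) (2 * (T eb + 1) * p eb) (2 * (T ec + 1) * p ec)
            / sqrt (hex_det (T ea) (T eb) (T ec))) (at t)"
proof -
  define Y where "Y e x = exp (wt x (fst (ends e)) + wt x (snd (ends e))) * cosh (l0 e / 2)" for e x
  define Tx where "Tx e x = 2 * (Y e x)\<^sup>2 - 1" for e x
  have L: "conf_length l0 ends (wt x) e = 2 * arcosh (Y e x)" for e x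
    by (simp add: conf_length_def Y_def)
  have Y_deriv: "(Y e has_real_derivative p e * Y e x) (at x)" for e x
    unfolding Y_def wt_def p_def by (auto intro!: derivative_eq_intros simp: algebra_simps)
  have Tx_deriv: "(Tx e has_real_derivative 2 * (Tx e x + 1) * p e) (at x)" for e x
    unfolding Tx_def using Y_deriv
    by (auto intro!: derivative_eq_intros simp: power2_eq_square algebra_simps)
  have Y_gt_1: "Y e t > 1" if "e \<in> {ea, eb, ec}" for e
    using adm that exp_mult_gt_1_iff[OF cosh_real_pos] by (auto simp: Y_def)
  have Tx_gt_1: "Tx e t > 1" if "e \<in> {ea, eb, ec}" for e
    using one_less_power[OF Y_gt_1[OF that], of 2] unfolding Tx_def by simp
  have T_eq: "T e = Tx e t" if "e \<in> {ea, eb, ec}" for e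
    using L[of t e] Y_gt_1[OF that] unfolding T_def Tx_def wt_def by (simp add: cosh_double_arcosh)
  have "((\<lambda>x. arcosh ((Tx ea x + Tx eb x * Tx ec x) / sqrt (((Tx eb x)\<^sup>2 - 1) * ((Tx ec x)\<^sup>2 - 1))))
          has_real_derivative
            hex_side_deriv_num (T ea) (T eb) (T ec)
              (2 * (T ea + 1) * p ea) (2 * (T eb + 1) * p eb) (2 * (T ec + 1) * p ec)
            / sqrt (hex_det (T ea) (T eb) (T ec))) (at t)"
    unfolding T_eq[of ea, simplified] T_eq[of eb, simplified] T_eq[of ec, simplified]
    by (rule arcosh_hexagon_law_has_real_derivative[OF Tx_deriv Tx_deriv Tx_deriv]) (simp_all add: Tx_gt_1)
  then show ?thesis
  proof (rule has_field_derivative_transform_within_open)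
    have "continuous_on UNIV (Y e)" for e
      unfolding Y_def wt_def by (intro continuous_intros)
    then show "open {x. Y ea x > 1 \<and> Y eb x > 1 \<and> Y ec x > 1}"
      by (intro open_Collect_conj open_Collect_less continuous_on_const) auto
    show "t \<in> {x. Y ea x > 1 \<and> Y eb x > 1 \<and> Y ec x > 1}"
      using Y_gt_1 by simp
  next
    fix x assume "x \<in> {x. Y ea x > 1 \<and> Y eb x > 1 \<and> Y ec x > 1}"
    then show "arcosh ((Tx ea x + Tx eb x * Tx ec x) / sqrt (((Tx eb x)\<^sup>2 - 1) * ((Tx ec x)\<^sup>2 - 1)))
        = hex_side (conf_length l0 ends (wt x) ea) (conf_length l0 ends (wt x) eb)
                   (conf_length l0 ends (wt x) ec)"
      unfolding L Tx_def by (subst hex_side_eq_arcosh_cosh) (auto simp: cosh_double_arcosh)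
  qed
qed

lemma sum_eq_of_mset_pair_eq:
  assumes "{#a, b#} = {#c, d#}"
  shows "h a + h b = (h c + h d :: 'b::comm_monoid_add)"
proof -
  have "sum_mset (image_mset h {#a, b#}) = sum_mset (image_mset h {#c, d#})"
    using assms by simp
  then show ?thesis by (simp add: add.commute)
qed

lemma sum_lessThan_3: "(\<Sum>k<3::nat. g k) = g 0 + g 1 + (g 2 :: 'a::comm_monoid_add)"
  by (simp add: eval_nat_numeral add.assoc)

lemma face_corner_sum_has_real_derivative:
  fixes w u :: "nat \<Rightarrow> real" and fv :: "'f \<Rightarrow> nat \<Rightarrow> nat" and fe :: "'f \<Rightarrow> nat \<Rightarrow> 'e"
    and ends :: "'e \<Rightarrow> nat \<times> nat" and l0 :: "'e \<Rightarrow> real" and f :: 'f and t :: real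
  defines "T \<equiv> \<lambda>k. cosh (conf_length l0 ends (\<lambda>i. w i + t * u i) (fe f k))"
  assumes face: "\<forall>k<3. {# fst (ends (fe f k)), snd (ends (fe f k)) #}
                      = {# fv f ((k + 1) mod 3), fv f ((k + 2) mod 3) #}"
    and adm: "\<forall>k<3. w (fst (ends (fe f k))) + t * u (fst (ends (fe f k)))
                   + (w (snd (ends (fe f k))) + t * u (snd (ends (fe f k))))
                 > - ln (cosh (l0 (fe f k) / 2))"
  shows "((\<lambda>x. \<Sum>k<3. u (fv f k) * corner_theta fe l0 ends (\<lambda>i. w i + x * u i) f k)
          has_real_derivative
            face_form (T 0) (T 1) (T 2) (u (fv f 0)) (u (fv f 1)) (u (fv f 2))
            / sqrt (hex_det (T 0) (T 1) (T 2))) (at t)"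
proof -
  have p: "u (fst (ends (fe f k))) + u (snd (ends (fe f k)))
             = u (fv f ((k + 1) mod 3)) + u (fv f ((k + 2) mod 3))" if "k < 3" for k
    using face that by (intro sum_eq_of_mset_pair_eq) auto
  have d: "((\<lambda>x. corner_theta fe l0 ends (\<lambda>i. w i + x * u i) f k) has_real_derivative
             hex_side_deriv_num (T k) (T ((k + 1) mod 3)) (T ((k + 2) mod 3))
               (2 * (T k + 1) * (u (fst (ends (fe f k))) + u (snd (ends (fe f k)))))
               (2 * (T ((k + 1) mod 3) + 1) * (u (fst (ends (fe f ((k + 1) mod 3))))
                                               + u (snd (ends (fe f ((k + 1) mod 3))))))
               (2 * (T ((k + 2) mod 3) + 1) * (u (fst (ends (fe f ((k + 2) mod 3))))
                                               + u (snd (ends (fe f ((k + 2) mod 3))))))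
             / sqrt (hex_det (T k) (T ((k + 1) mod 3)) (T ((k + 2) mod 3)))) (at t)" if "k < 3" for k
    unfolding corner_theta_def Let_def T_def
    by (rule hex_side_conf_length_has_real_derivative) (use adm that in auto)
  have "((\<lambda>x. \<Sum>k<3. u (fv f k) * corner_theta fe l0 ends (\<lambda>i. w i + x * u i) f k)
          has_real_derivative
            u (fv f 0) * (hex_side_deriv_num (T 0) (T 1) (T 2)
              (2 * (T 0 + 1) * (u (fv f 1) + u (fv f 2))) (2 * (T 1 + 1) * (u (fv f 2) + u (fv f 0)))
              (2 * (T 2 + 1) * (u (fv f 0) + u (fv f 1))) / sqrt (hex_det (T 0) (T 1) (T 2)))
          + u (fv f 1) * (hex_side_deriv_num (T 1) (T 2) (T 0)
              (2 * (T 1 + 1) * (u (fv f 2) + u (fv f 0))) (2 * (T 2 + 1) * (u (fv f 0) + u (fv f 1)))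
              (2 * (T 0 + 1) * (u (fv f 1) + u (fv f 2))) / sqrt (hex_det (T 0) (T 1) (T 2)))
          + u (fv f 2) * (hex_side_deriv_num (T 2) (T 0) (T 1)
              (2 * (T 2 + 1) * (u (fv f 0) + u (fv f 1))) (2 * (T 0 + 1) * (u (fv f 1) + u (fv f 2)))
              (2 * (T 1 + 1) * (u (fv f 2) + u (fv f 0))) / sqrt (hex_det (T 0) (T 1) (T 2)))) (at t)"
    unfolding sum_lessThan_3
    using d[of 0] d[of 1] d[of 2] p[of 0] p[of 1] p[of 2]
    by (intro DERIV_add DERIV_cmult) (simp_all add: hex_det_rotate numeral_2_eq_2)
  then show ?thesis
    unfolding face_form_def add_divide_distrib by simp
qed

lemma cosh_conf_length_gt_1:
  assumes "w (fst (ends e)) + w (snd (ends e)) > - ln (cosh (l0 e / 2))"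
  shows "cosh (conf_length l0 ends w e) > 1"
proof -
  define y where "y = exp (w (fst (ends e)) + w (snd (ends e))) * cosh (l0 e / 2)"
  have "y > 1" using assms exp_mult_gt_1_iff[OF cosh_real_pos] by (simp add: y_def)
  then have "2 * y\<^sup>2 - 1 > 1" using one_less_power[of y 2] by simp
  with \<open>y > 1\<close> show ?thesis by (simp add: conf_length_def y_def cosh_double_arcosh)
qed

lemma admissible_W_segment:
  assumes "w1 \<in> admissible_W n E l0 ends" "w2 \<in> admissible_W n E l0 ends" "0 \<le> t" "t \<le> 1"
  shows "(\<lambda>i. w1 i + t * (w2 i - w1 i)) \<in> admissible_W n E l0 ends"
proof -
  have "x + t * (y - x) > c" if "x > c" "y > c" for x y c :: real
  proof -
    have "x + t * (y - x) - c = (1 - t) * (x - c) + t * (y - c)" by algebra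
    also have "\<dots> > 0"
      using that assms(3,4) by (cases "t = 0") (auto intro: add_nonneg_pos add_pos_nonneg)
    finally show ?thesis by simp
  qed
  note between = this
  show ?thesis
    unfolding admissible_W_def
  proof (intro CollectI conjI allI impI ballI)
    fix i assume "i \<notin> {1..n}"
    then show "w1 i + t * (w2 i - w1 i) = 0"
      using assms(1,2) unfolding admissible_W_def by simp
  next
    fix e assume "e \<in> E"
    then have "w1 (fst (ends e)) + w1 (snd (ends e)) > - ln (cosh (l0 e / 2))"
      "w2 (fst (ends e)) + w2 (snd (ends e)) > - ln (cosh (l0 e / 2))"
      using assms(1,2) unfolding admissible_W_def by auto
    from between[OF this]
    show "w1 (fst (ends e)) + t * (w2 (fst (ends e)) - w1 (fst (ends e)))
          + (w1 (snd (ends e)) + t * (w2 (snd (ends e)) - w1 (snd (ends e))))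
          > - ln (cosh (l0 e / 2))"
      by (simp add: algebra_simps)
  qed
qed

lemma admissible_W_differ_in_range:
  assumes "w1 \<in> admissible_W n E l0 ends" "w2 \<in> admissible_W n E l0 ends" "w1 \<noteq> w2"
  shows "\<exists>i\<in>{1..n}. w1 i \<noteq> w2 i"
proof -
  obtain i where "w1 i \<noteq> w2 i" using assms(3) by blast
  moreover have "w1 i = w2 i" if "i \<notin> {1..n}"
    using assms(1,2) that unfolding admissible_W_def by simp
  ultimately show ?thesis by blast
qed

lemma sum_weighted_Bcurv_eq_sum_faces:
  assumes "finite F" "\<forall>f\<in>F. \<forall>k<3. fv f k \<in> {1..n}"
  shows "(\<Sum>i\<in>{1..n}. u i * Bcurv F fv fe l0 ends i w) =
         (\<Sum>f\<in>F. \<Sum>k<3. u (fv f k) * corner_theta fe l0 ends w f k)"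
proof -
  define h where "h = (\<lambda>(f, k). u (fv f k) * corner_theta fe l0 ends w f k)"
  have "u i * Bcurv F fv fe l0 ends i w = sum h {x \<in> F \<times> {..<3}. (\<lambda>(f, k). fv f k) x = i}" for i
  proof -
    have "{(f, k). f \<in> F \<and> k < 3 \<and> fv f k = i} = {x \<in> F \<times> {..<3}. (\<lambda>(f, k). fv f k) x = i}"
      by auto
    moreover have "u i * corner_theta fe l0 ends w f k = h (f, k)" if "fv f k = i" for f k
      using that by (simp add: h_def)
    ultimately show ?thesis
      unfolding Bcurv_def sum_distrib_left by (auto intro: sum.cong)
  qed
  then have "(\<Sum>i\<in>{1..n}. u i * Bcurv F fv fe l0 ends i w)
      = (\<Sum>i\<in>{1..n}. sum h {x \<in> F \<times> {..<3}. (\<lambda>(f, k). fv f k) x = i})"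
    by simp
  also have "\<dots> = sum h (F \<times> {..<3})"
    by (rule sum.group) (use assms in auto)
  finally show ?thesis
    unfolding sum.cartesian_product h_def by simp
qed

lemma weighted_Bcurv_has_negative_derivative:
  fixes w u :: "nat \<Rightarrow> real"
  assumes tri: "closed_triangulation n F E fv fe ends"
    and adm: "(\<lambda>i. w i + t * u i) \<in> admissible_W n E l0 ends"
    and nonzero: "\<exists>i\<in>{1..n}. u i \<noteq> 0"
  shows "\<exists>D. ((\<lambda>x. \<Sum>i\<in>{1..n}. u i * Bcurv F fv fe l0 ends i (\<lambda>i. w i + x * u i))
                  has_real_derivative D) (at t) \<and> D < 0"
proof -
  define T where "T f k = cosh (conf_length l0 ends (\<lambda>i. w i + t * u i) (fe f k))" for f k
  define D where "D f = face_form (T f 0) (T f 1) (T f 2) (u (fv f 0)) (u (fv f 1)) (u (fv f 2))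
                          / sqrt (hex_det (T f 0) (T f 1) (T f 2))" for f
  have fin: "finite F" and fv: "\<forall>f\<in>F. \<forall>k<3. fv f k \<in> {1..n}"
    using tri unfolding closed_triangulation_def by blast+
  have edge_adm: "\<forall>k<3. w (fst (ends (fe f k))) + t * u (fst (ends (fe f k)))
                     + (w (snd (ends (fe f k))) + t * u (snd (ends (fe f k))))
                   > - ln (cosh (l0 (fe f k) / 2))" if "f \<in> F" for f
    using tri adm that unfolding closed_triangulation_def admissible_W_def by auto
  have T_gt_1: "T f k > 1" if "f \<in> F" "k < 3" for f k
    unfolding T_def by (rule cosh_conf_length_gt_1) (use edge_adm that in auto)
  have deriv: "((\<lambda>x. \<Sum>i\<in>{1..n}. u i * Bcurv F fv fe l0 ends i (\<lambda>i. w i + x * u i))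
                  has_real_derivative (\<Sum>f\<in>F. D f)) (at t)"
    unfolding sum_weighted_Bcurv_eq_sum_faces[OF fin fv] D_def T_def
    using tri edge_adm unfolding closed_triangulation_def
    by (intro DERIV_sum face_corner_sum_has_real_derivative) auto
  have D_nonpos: "D f \<le> 0" if "f \<in> F" for f
    unfolding D_def using T_gt_1[OF that]
    by (intro divide_nonpos_nonneg face_form_nonpos real_sqrt_ge_zero less_imp_le[OF hex_det_pos])
      auto
  obtain i where "i \<in> {1..n}" "u i \<noteq> 0" using nonzero by blast
  then obtain f k where f: "f \<in> F" "k < 3" "u (fv f k) \<noteq> 0"
    using tri unfolding closed_triangulation_def by metis
  then have "(u (fv f 0), u (fv f 1), u (fv f 2)) \<noteq> (0, 0, 0)"
    by (auto simp: less_Suc_eq eval_nat_numeral)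
  then have "D f < 0"
    unfolding D_def using T_gt_1[OF f(1)]
    by (intro divide_neg_pos face_form_neg real_sqrt_gt_zero hex_det_pos) auto
  then have "(\<Sum>f\<in>F. D f) < (\<Sum>f\<in>F. 0)"
    using fin f(1) D_nonpos by (intro sum_strict_mono_ex1) auto
  with deriv show ?thesis by (intro exI[of _ "\<Sum>f\<in>F. D f"]) simp
qed

theorem proposition3p3:
  fixes n :: nat and F :: "'f set" and E :: "'e set"
    and fv :: "'f \<Rightarrow> nat \<Rightarrow> nat" and fe :: "'f \<Rightarrow> nat \<Rightarrow> 'e"
    and ends :: "'e \<Rightarrow> nat \<times> nat" and l0 :: "'e \<Rightarrow> real"
  assumes "closed_triangulation n F E fv fe ends"
    and "\<forall>e\<in>E. l0 e > 0"
  shows "inj_on (\<lambda>w. \<lambda>i\<in>{1..n}. Bcurv F fv fe l0 ends i w) (admissible_W n E l0 ends)"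
proof (rule inj_onI, rule ccontr)
  fix w1 w2
  assume w1: "w1 \<in> admissible_W n E l0 ends" and w2: "w2 \<in> admissible_W n E l0 ends"
    and B_eq: "(\<lambda>i\<in>{1..n}. Bcurv F fv fe l0 ends i w1) = (\<lambda>i\<in>{1..n}. Bcurv F fv fe l0 ends i w2)"
    and "w1 \<noteq> w2"
  define u where "u i = w2 i - w1 i" for i
  define g where "g x = (\<Sum>i\<in>{1..n}. u i * Bcurv F fv fe l0 ends i (\<lambda>i. w1 i + x * u i))" for x
  have nonzero: "\<exists>i\<in>{1..n}. u i \<noteq> 0"
    using admissible_W_differ_in_range[OF w1 w2 \<open>w1 \<noteq> w2\<close>] unfolding u_def
    by (metis right_minus_eq)
  have "g 1 < g 0"
  proof (rule DERIV_neg_imp_decreasing[where f = g])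
    fix x :: real assume "0 \<le> x" "x \<le> 1"
    then have "(\<lambda>i. w1 i + x * u i) \<in> admissible_W n E l0 ends"
      unfolding u_def by (rule admissible_W_segment[OF w1 w2])
    then show "\<exists>y. (g has_real_derivative y) (at x) \<and> y < 0"
      unfolding g_def by (rule weighted_Bcurv_has_negative_derivative[OF assms(1) _ nonzero])
  qed simp
  have "Bcurv F fv fe l0 ends i w1 = Bcurv F fv fe l0 ends i w2" if "i \<in> {1..n}" for i
    using fun_cong[OF B_eq, of i] that by simp
  then have "g 0 = g 1"
    unfolding g_def u_def by (intro sum.cong) auto
  with \<open>g 1 < g 0\<close> show False by simp
qed

end
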